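(* Under Weak Ordering, in the limit $m\to\infty$, $\Pr[B_0]=2/3$ and $\Pr[B_\gamma]=2^{-\gamma}/3$ for every integer $\gamma>0$.
   Context: Fix $m\ge 1$. A random program is a sequence $x_1,\dots,x_{m+2}$ of memory operations, each with a type in $\{\mathrm{LD},\mathrm{ST}\}$: $x_1,\dots,x_m$ have i.i.d. types, each $\mathrm{ST}$ with probability $1/2$ and $\mathrm{LD}$ with probability $1/2$; $x_{m+1}$ (the critical load) has type $\mathrm{LD}$ and $x_{m+2}$ (the critical store) has type $\mathrm{ST}$. The initial order is $S_0=(x_1,\dots,x_{m+2})$. A memory model is specified by the set of ordered type pairs $(\tau_1,\tau_2)$ for which an instruction of type $\tau_2$ may be moved ahead of an immediately preceding instruction of type $\tau_1$: Sequential Consistency (SC) allows no pair; Total Store Order (TSO) allows only the pair $(\mathrm{ST},\mathrm{LD})$ (a load may move ahead of a preceding store); Weak Ordering (WO) allows all four pairs. The settling process runs rounds $r=1,\dots,m+2$. Before round $r$, the current order $S_{r-1}$ consists of $x_1,\dots,x_{r-1}$ in some order in positions $1,\dots,r-1$, followed by $x_r,\dots,x_{m+2}$ in positions $r,\dots,m+2$. In round $r$, instruction $x_r$ (starting at position $r$) repeatedly attempts to swap with the instruction immediately preceding it in the current order: the attempt fails automatically if the pair (type of the preceding instruction, type of $x_r$) is not allowed by the memory model, or if $x_r$ is the critical store and the preceding instruction is the critical load; otherwise the attempt succeeds independently with probability $1/2$. The round ends when an attempt fails or $x_r$ reaches position $1$; the resulting order is $S_r$. The final order is $S_{m+2}$.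 For $\gamma\ge 0$, $B_\gamma$ is the event that in $S_{m+2}$ exactly $\gamma$ instructions lie strictly between the critical load and the critical store. *)

theory Defs
  imports "HOL-Probability.Probability"
begin

datatype optype = LD | ST

text \<open>Memory models: the set of ordered type pairs (tau1, tau2) such that an instruction
  of type tau2 may move ahead of an immediately preceding instruction of type tau1.\<close>
definition SC :: "(optype \<times> optype) set" where "SC = {}"
definition TSO :: "(optype \<times> optype) set" where "TSO = {(ST, LD)}"
definition WO :: "(optype \<times> optype) set" where "WO = UNIV"

fun types_pmf :: "nat \<Rightarrow> optype list pmf" where
  "types_pmf 0 = return_pmf []"
| "types_pmf (Suc n) =
     bind_pmf (pmf_of_set {LD, ST}) (\<lambda>t. bind_pmf (types_pmf n) (\<lambda>ts. return_pmf (t # ts)))"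

text \<open>Instructions are labelled 1..m+2; label m+1 is the critical load, m+2 the critical store. The moving instruction sits at (0-based) list index p and
  repeatedly attempts to swap with its predecessor.\<close>
fun move :: "(optype \<times> optype) set \<Rightarrow> (nat \<Rightarrow> optype) \<Rightarrow> nat \<Rightarrow> nat list \<Rightarrow> nat \<Rightarrow> nat list pmf" where
  "move A ty m ord 0 = return_pmf ord"
| "move A ty m ord (Suc p) =
     (let prev = ord ! p; cur = ord ! Suc p in
      if (ty prev, ty cur) \<notin> A \<or> (cur = m + 2 \<and> prev = m + 1) then return_pmf ord
      else bind_pmf (bernoulli_pmf (1/2))
             (\<lambda>b. if b then move A ty m (ord[p := cur, Suc p := prev]) p else return_pmf ord))"

text \<open>Rounds r = 1..m+2: instruction x_r starts at position r (list index r-1).\<close>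
definition settle :: "(optype \<times> optype) set \<Rightarrow> (nat \<Rightarrow> optype) \<Rightarrow> nat \<Rightarrow> nat list pmf" where
  "settle A ty m = foldl (\<lambda>P r. bind_pmf P (\<lambda>ord. move A ty m ord (r - 1)))
                        (return_pmf [1..<m + 3]) [1..<m + 3]"

definition type_of :: "optype list \<Rightarrow> nat \<Rightarrow> optype" where
  "type_of tys i = (tys @ [LD, ST]) ! (i - 1)"

definition final_order :: "(optype \<times> optype) set \<Rightarrow> nat \<Rightarrow> nat list pmf" where
  "final_order A m = bind_pmf (types_pmf m) (\<lambda>tys. settle A (type_of tys) m)"

definition B_event :: "nat \<Rightarrow> nat \<Rightarrow> nat list \<Rightarrow> bool" where
  "B_event m \<gamma> ord \<longleftrightarrow> (\<exists>i j. i < length ord \<and> j < length ord \<and> ord ! i = m + 1 \<and> ord ! j = m + 2 \<and>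
      (if i < j then j - i - 1 else i - j - 1) = \<gamma>)"

end

theory Submission imports Defs begin

(* Under WO every type pair may be swapped, so a moving instruction is stopped only
   by a failed coin flip, by reaching the front, or (for the critical store) by the
   critical load.  Hence the number of successful swaps in a round is a truncated
   geometric variable (geom_trunc), and a round just moves one list element back by
   that many places (shift_back).  Rounds 1..m keep the critical pair at the end in
   place, so in round m+1 the critical load moves back K ~ geom_trunc m places and
   in round m+2 the critical store moves back J ~ geom_trunc K places; the final gap
   is K - J (gap_pmf).  The probability of B_gamma is therefore an explicit mixture
   of geometric weights, and letting m go to infinity gives the geometric series
   sum_k 2^-(k+1) 2^-k = 2/3 for gamma = 0 and sum_k 2^-(k+gamma+1) 2^-(k+1) = 2^-gamma/3
   for gamma > 0. *)

section \<open>The truncated geometric distribution\<close>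

text \<open>Number of successes of fair coin flips before the first failure, capped at c:
  the number of places a moving instruction travels when nothing blocks it for c steps.\<close>
fun geom_trunc :: "nat \<Rightarrow> nat pmf" where
  "geom_trunc 0 = return_pmf 0"
| "geom_trunc (Suc c) =
     bind_pmf (bernoulli_pmf (1/2)) (\<lambda>b. if b then map_pmf Suc (geom_trunc c) else return_pmf 0)"

lemma set_geom_trunc: "set_pmf (geom_trunc c) \<subseteq> {..c}"
  by (induction c) (auto split: if_splits)

lemma pmf_fair_coin_bind:
  "pmf (bind_pmf (bernoulli_pmf (1/2)) f) x = (pmf (f True) x + pmf (f False) x) / 2"
  by (simp add: pmf_bind)

lemma pmf_geom_trunc:
  "k \<le> c \<Longrightarrow> pmf (geom_trunc c) k = (if k < c then (1/2)^(k+1) else (1/2)^c)"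
proof (induction c arbitrary: k)
  case 0
  then show ?case by simp
next
  case (Suc c)
  show ?case
  proof (cases k)
    case 0
    then show ?thesis by (simp add: pmf_fair_coin_bind pmf_map_outside)
  next
    case (Suc k')
    have "pmf (map_pmf Suc (geom_trunc c)) (Suc k') = pmf (geom_trunc c) k'"
      by (rule pmf_map_inj') simp
    then show ?thesis using Suc.IH[of k'] Suc.prems Suc by (simp add: pmf_fair_coin_bind)
  qed
qed

definition shift_back :: "nat list \<Rightarrow> nat \<Rightarrow> nat \<Rightarrow> nat list" where
  "shift_back ord p k = map (\<lambda>i. if i < p - k then ord ! i else if i = p - k then ord ! p
     else if i \<le> p then ord ! (i - 1) else ord ! i) [0..<length ord]"

lemma length_shift_back [simp]: "length (shift_back ord p k) = length ord"
  by (simp add: shift_back_def)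

lemma nth_shift_back:
  "i < length ord \<Longrightarrow> shift_back ord p k ! i = (if i < p - k then ord ! i else if i = p - k then ord ! p
     else if i \<le> p then ord ! (i - 1) else ord ! i)"
  by (simp add: shift_back_def)

lemma shift_back_0: "p < length ord \<Longrightarrow> shift_back ord p 0 = ord"
  by (rule nth_equalityI) (auto simp: nth_shift_back)

lemma shift_back_swap:
  "Suc p < length ord \<Longrightarrow> k \<le> p \<Longrightarrow>
   shift_back (ord[p := ord ! Suc p, Suc p := ord ! p]) p k = shift_back ord (Suc p) (Suc k)"
  by (rule nth_equalityI) (auto simp: nth_shift_back nth_list_update le_Suc_eq)

lemma notin_WO [simp]: "x \<notin> WO \<longleftrightarrow> False"
  by (simp add: WO_def)

text \<open>If the moving element at index p meets the critical barrier (itself the critical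
  store, its predecessor the critical load) exactly after c free steps, or never
  (c = p), then the round moves it back by a truncated geometric number of places.\<close>
lemma move_WO_shift_back:
  assumes "p < length ord" "c \<le> p"
    and free: "\<forall>k<c. \<not> (ord ! p = m + 2 \<and> ord ! (p - Suc k) = m + 1)"
    and blocked: "c < p \<longrightarrow> ord ! p = m + 2 \<and> ord ! (p - Suc c) = m + 1"
  shows "move WO ty m ord p = map_pmf (shift_back ord p) (geom_trunc c)"
  using assms
proof (induction p arbitrary: ord c)
  case 0
  then show ?case by (simp add: shift_back_0)
next
  case (Suc p)
  show ?case
  proof (cases c)
    case 0
    then show ?thesis using Suc.prems by (simp add: shift_back_0)
  next
    case (Suc c')
    define ord' where "ord' = ord[p := ord ! Suc p, Suc p := ord ! p]"
    have not_barrier: "\<not> (ord ! Suc p = m + 2 \<and> ord ! p = m + 1)"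
      using Suc.prems(3) Suc by auto
    have IH: "move WO ty m ord' p = map_pmf (shift_back ord' p) (geom_trunc c')"
    proof (rule Suc.IH)
      show "p < length ord'" "c' \<le> p" using Suc.prems Suc by (simp_all add: ord'_def)
      show "\<forall>k<c'. \<not> (ord' ! p = m + 2 \<and> ord' ! (p - Suc k) = m + 1)"
        using Suc.prems(1,3) Suc by (auto simp: ord'_def nth_list_update)
      show "c' < p \<longrightarrow> ord' ! p = m + 2 \<and> ord' ! (p - Suc c') = m + 1"
        using Suc.prems(1,4) Suc by (auto simp: ord'_def nth_list_update)
    qed
    have shifted: "map_pmf (shift_back ord' p) (geom_trunc c')
        = map_pmf (shift_back ord (Suc p) \<circ> Suc) (geom_trunc c')"
    proof (rule map_pmf_cong[OF refl])
      fix x assume "x \<in> set_pmf (geom_trunc c')"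
      then have "x \<le> p" using set_geom_trunc Suc.prems(2) Suc by fastforce
      then show "shift_back ord' p x = (shift_back ord (Suc p) \<circ> Suc) x"
        using Suc.prems(1) by (simp add: ord'_def shift_back_swap)
    qed
    have "move WO ty m ord (Suc p) = bind_pmf (bernoulli_pmf (1/2))
             (\<lambda>b. if b then move WO ty m ord' p else return_pmf ord)"
      unfolding ord'_def using not_barrier by (auto simp: Let_def)
    also have "\<dots> = bind_pmf (bernoulli_pmf (1/2))
             (\<lambda>b. if b then map_pmf (shift_back ord (Suc p) \<circ> Suc) (geom_trunc c')
                  else return_pmf (shift_back ord (Suc p) 0))"
      unfolding IH shifted shift_back_0[OF Suc.prems(1)] ..
    also have "\<dots> = map_pmf (shift_back ord (Suc p)) (geom_trunc c)"
      by (simp add: Suc map_bind_pmf map_pmf_comp if_distrib comp_def cong: if_cong)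
    finally show ?thesis .
  qed
qed

lemma move_WO_unblocked:
  assumes "p < length ord" "ord ! p \<noteq> m + 2"
  shows "move WO ty m ord p = map_pmf (shift_back ord p) (geom_trunc p)"
  by (rule move_WO_shift_back) (use assms in auto)

text \<open>After r \<le> m rounds the unsettled suffix is untouched and the prefix of length r
  is a rearrangement of labels at most r; in particular the critical pair is still
  at the last two positions.\<close>
definition settled_prefix :: "nat \<Rightarrow> nat \<Rightarrow> nat list \<Rightarrow> bool" where
  "settled_prefix m r ord \<longleftrightarrow> length ord = m + 2
     \<and> (\<forall>i. r \<le> i \<and> i < m + 2 \<longrightarrow> ord ! i = Suc i) \<and> (\<forall>i<r. ord ! i \<le> r)"

definition round_step :: "(nat \<Rightarrow> optype) \<Rightarrow> nat \<Rightarrow> nat list pmf \<Rightarrow> nat \<Rightarrow> nat list pmf" where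
  "round_step ty m = (\<lambda>P r. bind_pmf P (\<lambda>ord. move WO ty m ord (r - 1)))"

lemma settled_prefix_step:
  assumes inv: "settled_prefix m r q" and "r < m" and k: "k \<le> r"
  shows "settled_prefix m (Suc r) (shift_back q r k)"
  unfolding settled_prefix_def
proof (intro conjI allI impI)
  have len: "length q = m + 2" and qr: "q ! r = Suc r"
    and low: "\<And>i. i < r \<Longrightarrow> q ! i \<le> r"
    using inv \<open>r < m\<close> by (auto simp: settled_prefix_def)
  show "length (shift_back q r k) = m + 2" using len by simp
  fix i
  show "shift_back q r k ! i = Suc i" if "Suc r \<le> i \<and> i < m + 2"
    using inv that by (auto simp: settled_prefix_def nth_shift_back)
  show "shift_back q r k ! i \<le> Suc r" if i: "i < Suc r"
  proof -
    have "shift_back q r k ! i = (if i < r - k then q ! i else if i = r - k then q ! r else q ! (i - 1))"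
      using i len \<open>r < m\<close> by (simp add: nth_shift_back)
    moreover have "q ! i \<le> Suc r" if "i < r - k" using that by (intro le_SucI low) simp
    moreover have "q ! (i - 1) \<le> Suc r" if "i > r - k" using that i k by (intro le_SucI low) simp
    ultimately show ?thesis using qr by (auto split: if_splits)
  qed
qed

lemma settled_after_rounds:
  "r \<le> m \<Longrightarrow> q \<in> set_pmf (foldl (round_step ty m) (return_pmf [1..<m+3]) [1..<r+1])
   \<Longrightarrow> settled_prefix m r q"
proof (induction r arbitrary: q)
  case 0
  then show ?case by (simp add: settled_prefix_def)
next
  case (Suc r)
  have "[1..<Suc r + 1] = [1..<r+1] @ [Suc r]" by simp
  then obtain q0 where q0: "q0 \<in> set_pmf (foldl (round_step ty m) (return_pmf [1..<m+3]) [1..<r+1])"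
    and q: "q \<in> set_pmf (move WO ty m q0 r)"
    using Suc.prems by (auto simp: round_step_def)
  have inv: "settled_prefix m r q0" using Suc.IH[OF _ q0] Suc.prems by simp
  then have "move WO ty m q0 r = map_pmf (shift_back q0 r) (geom_trunc r)"
    using Suc.prems by (intro move_WO_unblocked) (auto simp: settled_prefix_def)
  then obtain k where "k \<le> r" "q = shift_back q0 r k" using q set_geom_trunc by fastforce
  then show ?case using settled_prefix_step[OF inv] Suc.prems by simp
qed

section \<open>The last two rounds\<close>

lemma after_load_round:
  assumes inv: "settled_prefix m m q" and k: "k \<le> m"
  shows "shift_back q m k ! (m - k) = m + 1" "shift_back q m k ! (m + 1) = m + 2"
    "\<And>i. i < m + 1 \<Longrightarrow> i \<noteq> m - k \<Longrightarrow> shift_back q m k ! i \<le> m"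
proof -
  have len: "length q = m + 2" and qm: "q ! m = m + 1" "q ! (m + 1) = m + 2"
    and low: "\<And>i. i < m \<Longrightarrow> q ! i \<le> m"
    using inv by (auto simp: settled_prefix_def)
  show "shift_back q m k ! (m - k) = m + 1" "shift_back q m k ! (m + 1) = m + 2"
    using len qm by (simp_all add: nth_shift_back)
  fix i assume "i < m + 1" "i \<noteq> m - k"
  then show "shift_back q m k ! i \<le> m" using len low k by (auto simp: nth_shift_back)
qed

lemma after_store_round:
  assumes inv: "settled_prefix m m q" and k: "k \<le> m" and j: "j \<le> k"
  defines "final \<equiv> shift_back (shift_back q m k) (m + 1) j"
  shows "final ! (m - k) = m + 1" "final ! (m + 1 - j) = m + 2"
    "\<And>i. i < m + 2 \<Longrightarrow> i \<noteq> m - k \<Longrightarrow> i \<noteq> m + 1 - j \<Longrightarrow> final ! i \<le> m"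
proof -
  note F = after_load_round[OF inv k]
  have len: "length (shift_back q m k) = m + 2" using inv by (simp add: settled_prefix_def)
  have nth: "final ! i = (if i < m + 1 - j then shift_back q m k ! i
      else if i = m + 1 - j then shift_back q m k ! (m + 1) else shift_back q m k ! (i - 1))"
    if "i < m + 2" for i
    using len that by (simp add: final_def nth_shift_back)
  show "final ! (m - k) = m + 1" "final ! (m + 1 - j) = m + 2"
    using nth F(1,2) j k by auto
  fix i assume "i < m + 2" "i \<noteq> m - k" "i \<noteq> m + 1 - j"
  then show "final ! i \<le> m"
    using nth[of i] F(3)[of i] F(3)[of "i - 1"] j k by auto
qed

lemma B_event_final:
  assumes inv: "settled_prefix m m q" and k: "k \<le> m" and j: "j \<le> k"
  shows "B_event m \<gamma> (shift_back (shift_back q m k) (m + 1) j) \<longleftrightarrow> k - j = \<gamma>"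
proof -
  define final where "final = shift_back (shift_back q m k) (m + 1) j"
  note pos = after_store_round[OF inv k j, folded final_def]
  have len: "length final = m + 2" using inv by (simp add: final_def settled_prefix_def)
  have load: "final ! a = m + 1 \<longleftrightarrow> a = m - k" and store: "final ! a = m + 2 \<longleftrightarrow> a = m + 1 - j"
    if "a < m + 2" for a
    using pos pos(3)[OF that] by force+
  have gap: "(m + 1 - j) - (m - k) - 1 = k - j" and "m - k < m + 1 - j" using j k by auto
  show ?thesis
    unfolding B_event_def final_def[symmetric]
  proof
    assume "\<exists>a b. a < length final \<and> b < length final \<and> final ! a = m + 1 \<and> final ! b = m + 2
      \<and> (if a < b then b - a - 1 else a - b - 1) = \<gamma>"
    then obtain a b where "a < m + 2" "b < m + 2" "final ! a = m + 1" "final ! b = m + 2"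
      and "(if a < b then b - a - 1 else a - b - 1) = \<gamma>"
      using len by auto
    then show "k - j = \<gamma>" using load store gap \<open>m - k < m + 1 - j\<close> by auto
  next
    assume "k - j = \<gamma>"
    then show "\<exists>a b. a < length final \<and> b < length final \<and> final ! a = m + 1 \<and> final ! b = m + 2
      \<and> (if a < b then b - a - 1 else a - b - 1) = \<gamma>"
      using len pos(1,2) gap \<open>m - k < m + 1 - j\<close> j k by (intro exI[of _ "m - k"] exI[of _ "m + 1 - j"]) auto
  qed
qed

text \<open>The distribution of the gap: the load moves back K ~ geom_trunc m places, then the
  store moves back J ~ geom_trunc K places, and the gap is K - J.\<close>
definition gap_pmf :: "nat \<Rightarrow> nat pmf" where
  "gap_pmf m = bind_pmf (geom_trunc m) (\<lambda>k. map_pmf (\<lambda>j. k - j) (geom_trunc k))"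

lemma last_rounds_gap:
  assumes inv: "settled_prefix m m q"
  shows "map_pmf (B_event m \<gamma>) (bind_pmf (move WO ty m q m) (\<lambda>q'. move WO ty m q' (m + 1)))
       = map_pmf (\<lambda>d. d = \<gamma>) (gap_pmf m)"
proof -
  have load_round: "move WO ty m q m = map_pmf (shift_back q m) (geom_trunc m)"
    using inv by (intro move_WO_unblocked) (auto simp: settled_prefix_def)
  have store_round: "move WO ty m (shift_back q m k) (m + 1)
      = map_pmf (shift_back (shift_back q m k) (m + 1)) (geom_trunc k)" if k: "k \<le> m" for k
  proof (rule move_WO_shift_back)
    note F = after_load_round[OF inv k]
    show "m + 1 < length (shift_back q m k)" "k \<le> m + 1"
      using inv k by (simp_all add: settled_prefix_def)
    show "\<forall>k'<k. \<not> (shift_back q m k ! (m + 1) = m + 2 \<and> shift_back q m k ! (m + 1 - Suc k') = m + 1)"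
    proof (intro allI impI)
      fix k' assume "k' < k"
      then have "shift_back q m k ! (m - k') \<le> m" using F(3)[of "m - k'"] k by auto
      then show "\<not> (shift_back q m k ! (m + 1) = m + 2 \<and> shift_back q m k ! (m + 1 - Suc k') = m + 1)"
        by simp
    qed
    show "k < m + 1 \<longrightarrow> shift_back q m k ! (m + 1) = m + 2 \<and> shift_back q m k ! (m + 1 - Suc k) = m + 1"
      using F(1,2) by simp
  qed
  have "map_pmf (B_event m \<gamma>) (move WO ty m (shift_back q m k) (m + 1))
      = map_pmf (\<lambda>j. k - j = \<gamma>) (geom_trunc k)" if "k \<in> set_pmf (geom_trunc m)" for k
  proof -
    have k: "k \<le> m" using that set_geom_trunc by blast
    show ?thesis
      unfolding store_round[OF k] map_pmf_comp
      using set_geom_trunc[of k] B_event_final[OF inv k] by (intro map_pmf_cong) auto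
  qed
  then show ?thesis
    unfolding load_round gap_pmf_def map_bind_pmf bind_map_pmf map_pmf_comp
    by (intro bind_pmf_cong) (simp_all add: comp_def)
qed

lemma upt_last_two_rounds: "[1..<m+3] = [1..<m+1] @ [m+1, m+2]"
  by (simp add: numeral_3_eq_3)

theorem prob_B_event_WO:
  "measure_pmf.prob (final_order WO m) {ord. B_event m \<gamma> ord} = pmf (gap_pmf m) \<gamma>"
proof -
  have settle_gap: "map_pmf (B_event m \<gamma>) (settle WO ty m) = map_pmf (\<lambda>d. d = \<gamma>) (gap_pmf m)" for ty
  proof -
    define R where "R = foldl (round_step ty m) (return_pmf [1..<m+3]) [1..<m+1]"
    have "settle WO ty m = bind_pmf R (\<lambda>q. bind_pmf (move WO ty m q m) (\<lambda>q'. move WO ty m q' (m + 1)))"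
      unfolding settle_def upt_last_two_rounds R_def round_step_def
      by (simp del: move.simps add: bind_assoc_pmf)
    then have "map_pmf (B_event m \<gamma>) (settle WO ty m)
        = bind_pmf R (\<lambda>q. map_pmf (B_event m \<gamma>) (bind_pmf (move WO ty m q m) (\<lambda>q'. move WO ty m q' (m + 1))))"
      by (simp only: map_bind_pmf)
    also have "\<dots> = bind_pmf R (\<lambda>_. map_pmf (\<lambda>d. d = \<gamma>) (gap_pmf m))"
    proof (rule bind_pmf_cong[OF refl])
      fix q assume "q \<in> set_pmf R"
      then have "settled_prefix m m q" using settled_after_rounds[of m m q ty] by (simp add: R_def)
      then show "map_pmf (B_event m \<gamma>) (bind_pmf (move WO ty m q m) (\<lambda>q'. move WO ty m q' (m + 1)))
          = map_pmf (\<lambda>d. d = \<gamma>) (gap_pmf m)"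
        by (rule last_rounds_gap)
    qed
    finally show ?thesis by simp
  qed
  have "measure_pmf.prob (final_order WO m) {ord. B_event m \<gamma> ord}
      = measure_pmf.prob (map_pmf (B_event m \<gamma>) (final_order WO m)) {True}"
    by (simp add: vimage_def)
  also have "\<dots> = measure_pmf.prob (map_pmf (\<lambda>d. d = \<gamma>) (gap_pmf m)) {True}"
    by (simp add: final_order_def map_bind_pmf settle_gap)
  also have "\<dots> = pmf (gap_pmf m) \<gamma>"
    by (simp add: measure_pmf_single pmf_map vimage_def)
  finally show ?thesis .
qed

section \<open>The gap distribution and its limit\<close>

text \<open>Probability that the store ends exactly gamma places behind the load, given that
  the load moved back k places.\<close>
definition gap_weight :: "nat \<Rightarrow> nat \<Rightarrow> real" where
  "gap_weight \<gamma> k = (if \<gamma> \<le> k then (if \<gamma> = 0 then (1/2)^k else (1/2)^(k - \<gamma> + 1)) else 0)"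

lemma pmf_gap_given_load: "pmf (map_pmf (\<lambda>j. k - j) (geom_trunc k)) \<gamma> = gap_weight \<gamma> k"
proof -
  have "measure_pmf.prob (geom_trunc k) ((\<lambda>j. k - j) -` {\<gamma>})
      = measure_pmf.prob (geom_trunc k) (if \<gamma> \<le> k then {k - \<gamma>} else {})"
    using set_geom_trunc[of k] by (intro measure_eq_AE AE_pmfI) auto
  then show ?thesis
    by (simp add: pmf_map measure_pmf_single pmf_geom_trunc gap_weight_def)
qed

text \<open>Conditioning on the load displacement K gives an explicit finite mixture.\<close>
lemma pmf_gap_pmf:
  "pmf (gap_pmf m) \<gamma> = (\<Sum>k<m. (1/2)^(k+1) * gap_weight \<gamma> k) + (1/2)^m * gap_weight \<gamma> m"
proof -
  have "pmf (gap_pmf m) \<gamma> = (\<Sum>k\<le>m. pmf (geom_trunc m) k * gap_weight \<gamma> k)"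
    unfolding gap_pmf_def pmf_bind pmf_gap_given_load
    by (subst integral_measure_pmf[of "{..m}"]) (use set_geom_trunc in auto)
  also have "\<dots> = (\<Sum>k<m. (1/2)^(k+1) * gap_weight \<gamma> k) + (1/2)^m * gap_weight \<gamma> m"
    by (simp add: lessThan_Suc_atMost[symmetric] pmf_geom_trunc)
  finally show ?thesis .
qed

lemma truncated_mixture_limit:
  fixes w :: "nat \<Rightarrow> real"
  assumes "(\<lambda>k. (1/2)^(k+1) * w k) sums L" and bounded: "\<And>k. \<bar>w k\<bar> \<le> 1"
  shows "(\<lambda>m. (\<Sum>k<m. (1/2)^(k+1) * w k) + (1/2)^m * w m) \<longlonglongrightarrow> L"
proof -
  have partial: "(\<lambda>m. \<Sum>k<m. (1/2::real)^(k+1) * w k) \<longlonglongrightarrow> L"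
    using assms(1) by (simp add: sums_def)
  have geometric: "(\<lambda>m. (1/2::real)^m) \<longlonglongrightarrow> 0" by (rule LIMSEQ_realpow_zero) auto
  have "(\<lambda>m. (1/2::real)^m * w m) \<longlonglongrightarrow> 0"
  proof (rule tendsto_rabs_zero_cancel, rule tendsto_sandwich[OF _ _ tendsto_const geometric])
    show "\<forall>\<^sub>F m in sequentially. 0 \<le> \<bar>(1/2::real)^m * w m\<bar>" by simp
    show "\<forall>\<^sub>F m in sequentially. \<bar>(1/2::real)^m * w m\<bar> \<le> (1/2)^m"
      using bounded by (intro always_eventually allI) (simp add: abs_mult mult_left_le)
  qed
  from tendsto_add[OF partial this] show ?thesis by simp
qed

lemma gap_weight_bounded: "\<bar>gap_weight \<gamma> k\<bar> \<le> 1"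
  unfolding gap_weight_def by (auto simp del: power_Suc intro!: power_le_one)

lemma gap_series_zero: "(\<lambda>k. (1/2::real)^(k+1) * gap_weight 0 k) sums (2/3)"
proof -
  have "(\<lambda>k. (1/2::real) * (1/4)^k) sums ((1/2) * (1 / (1 - 1/4)))"
    by (intro sums_mult geometric_sums) auto
  moreover have "(\<lambda>k. (1/2::real)^(k+1) * gap_weight 0 k) = (\<lambda>k. (1/2) * (1/4)^k)"
    by (auto simp: gap_weight_def power_mult_distrib[symmetric] fun_eq_iff)
  ultimately show ?thesis by simp
qed

text \<open>For gamma > 0 the first gamma terms vanish; shifting them away leaves the geometric
  series (1/2)^(gamma+2) * sum_i (1/4)^i.\<close>
lemma gap_series_pos:
  assumes "\<gamma> > 0"
  shows "(\<lambda>k. (1/2::real)^(k+1) * gap_weight \<gamma> k) sums ((1/2)^\<gamma> / 3)"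
proof -
  have "(\<lambda>i. (1/2::real)^(\<gamma>+2) * (1/4)^i) sums ((1/2)^(\<gamma>+2) * (1 / (1 - 1/4)))"
    by (intro sums_mult geometric_sums) auto
  moreover have "(\<lambda>i. (1/2::real)^(i+\<gamma>+1) * gap_weight \<gamma> (i+\<gamma>)) = (\<lambda>i. (1/2)^(\<gamma>+2) * (1/4)^i)"
  proof
    fix i
    have "(1/2::real)^(i+\<gamma>+1) * (1/2)^(i+1) = (1/2)^(\<gamma>+2) * ((1/2)^i * (1/2)^i)"
      by (simp add: power_add[symmetric] ac_simps)
    then show "(1/2::real)^(i+\<gamma>+1) * gap_weight \<gamma> (i+\<gamma>) = (1/2)^(\<gamma>+2) * (1/4)^i"
      using assms by (simp add: gap_weight_def power_mult_distrib[symmetric])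
  qed
  ultimately have "(\<lambda>i. (1/2::real)^(i+\<gamma>+1) * gap_weight \<gamma> (i+\<gamma>)) sums ((1/2)^\<gamma> / 3)"
    by (simp add: power_add)
  moreover have "(\<Sum>i<\<gamma>. (1/2::real)^(i+1) * gap_weight \<gamma> i) = 0"
    by (simp add: gap_weight_def)
  ultimately show ?thesis
    using sums_iff_shift[of "\<lambda>k. (1/2::real)^(k+1) * gap_weight \<gamma> k" \<gamma>] by simp
qed

theorem theorem1:
  shows "(\<lambda>m. measure_pmf.prob (final_order WO m) {ord. B_event m 0 ord}) \<longlonglongrightarrow> 2 / 3
    \<and> (\<forall>\<gamma>::nat. \<gamma> > 0 \<longrightarrow>
         (\<lambda>m. measure_pmf.prob (final_order WO m) {ord. B_event m \<gamma> ord}) \<longlonglongrightarrow> (1 / 2) ^ \<gamma> / 3)"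
  unfolding prob_B_event_WO pmf_gap_pmf
  using truncated_mixture_limit[OF gap_series_zero gap_weight_bounded]
    truncated_mixture_limit[OF gap_series_pos gap_weight_bounded]
  by blast

end
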